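(* Suppose Assumptions (A1) and (A2) below hold and that $C > C^*$. Then for every nonempty $\mathscr{S} \in \mathcal{A}(k)$, $$\left| \inf_{T \in \mathcal{T}^{1/2}_{\mathscr{S}}} \sup_{\tau \in \mathrm{Lip}_C(\mathbb{R}^d)} \mathcal{R}(T,\mathscr{S},\tau) \;-\; \frac{C}{2}\,\frac{1}{\#\mathcal{S}_P} \sum_{s \in \mathcal{S}_P \setminus \mathscr{S}} \|X_s - X_{N_{\mathscr{S}}(s)}\| \right| \;\le\; B\,\sigma_E\,\frac{\min\{\#(\mathcal{S}_E \cap \mathcal{S}_P),\, k\}}{\#\mathcal{S}_P}.$$
   Context: Sites are indexed by $\mathcal{S}=\{1,\dots,S\}$. $\mathcal{S}_E\subseteq\mathcal{S}$ (experimental sites) has $\mathrm{card}(\mathcal{S}_E)\ge 2$, and $\mathcal{S}_P\subseteq\mathcal{S}$ (policy sites) is nonempty, with $\#\mathcal{S}_P=\mathrm{card}(\mathcal{S}_P)$; the two sets may overlap. Each site $s$ has a covariate vector $X_s\in\mathbb{R}^d$ and a known standard deviation $\sigma_s>0$. $\|\cdot\|$ is the Euclidean norm, and $\mathrm{Lip}_C(\mathbb{R}^d)$ is the set of functions $\tau:\mathbb{R}^d\to\mathbb{R}$ with $|\tau(x)-\tau(x')|\le C\|x-x'\|$ for all $x,x'$, where $C>0$ is known. (A1): the true conditional treatment effect function $\tau$ lies in $\mathrm{Lip}_C(\mathbb{R}^d)$. (A2): $X_s\neq X_{s'}$ for all $s\neq s'$ in $\mathcal{S}$. Fix an integer $1\le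 k<\mathrm{card}(\mathcal{S}_E)$ and set $\mathcal{A}(k)=\{\mathscr{S}\subset\mathcal{S}_E:\mathrm{card}(\mathscr{S})\le k\}$. For a nonempty $\mathscr{S}\in\mathcal{A}(k)$ with elements $\mathscr{S}_1<\dots<\mathscr{S}_m$, the data are $\hat\tau_{\mathscr{S}}=(\hat\tau_{\mathscr{S}_1},\dots,\hat\tau_{\mathscr{S}_m})^\top\sim\mathcal{N}_m(\tau_{\mathscr{S}},\Sigma_{\mathscr{S}})$, where $\tau_{\mathscr{S}}=(\tau(X_{\mathscr{S}_1}),\dots,\tau(X_{\mathscr{S}_m}))^\top$ and $\Sigma_{\mathscr{S}}=\mathrm{diag}(\sigma^2_{\mathscr{S}_1},\dots,\sigma^2_{\mathscr{S}_m})$. A treatment rule is a measurable map $T:\mathbb{R}^m\to[0,1]^{\#\mathcal{S}_P}$ with components $T_s$, $s\in\mathcal{S}_P$. $\mathcal{T}^{1/2}_{\mathscr{S}}$ is the set of treatment rules such that, for every positive definite diagonal matrix $\Sigma$ and every $s\in\mathcal{S}_P$, $\mathbb{E}[T_s(U)]=1/2$ when $U\sim\mathcal{N}_m(0,\Sigma)$. Regret is $\mathcal{R}(T,\mathscr{S},\tau)=\frac{1}{\#\mathcal{S}_P}\sum_{s\in\mathcal{S}_P}\tau(X_s)\big(\mathbf{1}\{\tau(X_s)\ge0\}-\mathbb{E}_{\tau_{\mathscr{S}}}[T_s(\hat\tau_{\mathscr{S}})]\big)$, where the expectation is taken under $\hat\tau_{\mathscr{S}}\sim\mathcal{N}(\tau_{\mathscr{S}},\Sigma_{\mathscr{S}})$.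 For $s\in\mathcal{S}_P$, $N_{\mathscr{S}}(s)\in\mathscr{S}$ is a nearest neighbor of $s$ in $\mathscr{S}$: $\|X_s-X_{N_{\mathscr{S}}(s)}\|\le\|X_s-X_{s'}\|$ for all $s'\in\mathscr{S}$, taking the smallest index when there are ties. $C^*=\max\{\sqrt{\pi/2}\,\sigma_{N_{\mathscr{S}}(s)}/\|X_s-X_{N_{\mathscr{S}}(s)}\| : \mathscr{S}\in\mathcal{A}(k)\text{ nonempty},\ s\in\mathcal{S}_P\setminus\mathscr{S}\}$. $\sigma_E=\max_{s\in\mathcal{S}_E}\sigma_s$. $B=\arg\max_{z\ge0} z\,\Phi(-z)$, where $\Phi$ is the standard normal CDF. *)

theory Defs
  imports "HOL-Probability.Probability"
begin

text \<open>Data vectors in R^m (m = card of the selected set Ss) are represented as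
  functions indexed by the sites in Ss (extensional functions on Ss).\<close>

definition gauss_data :: "nat set \<Rightarrow> (nat \<Rightarrow> real) \<Rightarrow> (nat \<Rightarrow> real) \<Rightarrow> (nat \<Rightarrow> real) measure" where
  "gauss_data Ss mu sig = PiM Ss (\<lambda>i. density lborel (normal_density (mu i) (sig i)))"

definition treatment_rules :: "nat set \<Rightarrow> nat set \<Rightarrow> (nat \<Rightarrow> (nat \<Rightarrow> real) \<Rightarrow> real) set" where
  "treatment_rules Ss SP = {T. \<forall>s\<in>SP. T s \<in> borel_measurable (PiM Ss (\<lambda>_. borel))
                                   \<and> (\<forall>u. 0 \<le> T s u \<and> T s u \<le> 1)}"

definition half_rules :: "nat set \<Rightarrow> nat set \<Rightarrow> (nat \<Rightarrow> (nat \<Rightarrow> real) \<Rightarrow> real) set" where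
  "half_rules Ss SP = {T \<in> treatment_rules Ss SP.
      \<forall>sig. (\<forall>i\<in>Ss. 0 < sig i) \<longrightarrow>
        (\<forall>s\<in>SP. integral\<^sup>L (gauss_data Ss (\<lambda>_. 0) sig) (T s) = 1/2)}"

definition regret :: "(nat \<Rightarrow> 'a) \<Rightarrow> (nat \<Rightarrow> real) \<Rightarrow> nat set \<Rightarrow>
    (nat \<Rightarrow> (nat \<Rightarrow> real) \<Rightarrow> real) \<Rightarrow> nat set \<Rightarrow> ('a \<Rightarrow> real) \<Rightarrow> real" where
  "regret X sig SP T Ss tau =
     (1 / real (card SP)) * (\<Sum>s\<in>SP. tau (X s) *
        ((if tau (X s) \<ge> 0 then 1 else 0)
         - integral\<^sup>L (gauss_data Ss (\<lambda>i. tau (X i)) sig) (T s)))"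

definition nn :: "(nat \<Rightarrow> 'a::real_normed_vector) \<Rightarrow> nat set \<Rightarrow> nat \<Rightarrow> nat" where
  "nn X Ss s = (LEAST j. j \<in> Ss \<and> (\<forall>j'\<in>Ss. norm (X s - X j) \<le> norm (X s - X j')))"

definition A_k :: "nat set \<Rightarrow> nat \<Rightarrow> nat set set" where
  "A_k SE k = {Ss. Ss \<subseteq> SE \<and> card Ss \<le> k}"

definition Cstar :: "(nat \<Rightarrow> 'a::real_normed_vector) \<Rightarrow> (nat \<Rightarrow> real) \<Rightarrow> nat set \<Rightarrow> nat set \<Rightarrow> nat \<Rightarrow> real" where
  "Cstar X sig SE SP k = Max {sqrt (pi/2) * sig (nn X Ss s) / norm (X s - X (nn X Ss s)) | Ss s.
       Ss \<in> A_k SE k \<and> Ss \<noteq> {} \<and> s \<in> SP - Ss}"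

definition Phi :: "real \<Rightarrow> real" where
  "Phi x = measure (density lborel std_normal_density) {..x}"

definition B_const :: real where
  "B_const = (SOME z. z \<ge> 0 \<and> (\<forall>w\<ge>0. w * Phi (-w) \<le> z * Phi (-z)))"

end

theory Submission
  imports Defs
begin

text \<open>
  Lower bound: \<open>\<tau> = C \<cdot> dist(\<cdot>, {X\<^sub>s | s \<in> \<S>})\<close> is \<open>C\<close>-Lipschitz and vanishes at every
  observed site, so the data are centred and every rule in \<open>\<T>\<^sup>1\<^sup>/\<^sup>2\<close> treats each policy site with
  probability \<open>1/2\<close>; this costs \<open>C \<parallel>X\<^sub>s - X\<^sub>N\<^sub>(\<^sub>s\<^sub>)\<parallel> / 2\<close> at every unobserved policy site.

  Upper bound: the probit rule \<open>T\<^sub>s(u) = \<Phi>(u\<^sub>N\<^sub>(\<^sub>s\<^sub>) / \<nu>\<^sub>s)\<close> has mean \<open>\<Phi>(\<tau>(X\<^sub>N\<^sub>(\<^sub>s\<^sub>)) / \<rho>\<^sub>s)\<close> with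
  \<open>\<rho>\<^sub>s\<^sup>2 = \<nu>\<^sub>s\<^sup>2 + \<sigma>\<^sub>N\<^sub>(\<^sub>s\<^sub>)\<^sup>2\<close>, and lies in \<open>\<T>\<^sup>1\<^sup>/\<^sup>2\<close>. At observed sites take \<open>\<rho>\<^sub>s = \<surd>2 \<sigma>\<^sub>s\<close>: the regret
  \<open>\<rho> |z| \<Phi>(-|z|)\<close> is at most \<open>\<rho> B \<Phi>(-B) \<le> \<rho> B / 2\<close>. At unobserved sites take
  \<open>\<rho>\<^sub>s = C d\<^sub>s / \<surd>(\<pi>/2)\<close>, which exceeds \<open>\<sigma>\<^sub>N\<^sub>(\<^sub>s\<^sub>)\<close> exactly because \<open>C > C\<^sup>*\<close>; the Gaussian tail bound
  \<open>\<Phi>(-\<surd>(\<pi>/2) x) \<le> e\<^sup>-\<^sup>x / 2\<close> together with \<open>(1 + x) e\<^sup>-\<^sup>x \<le> 1\<close> bounds the regret by \<open>C d\<^sub>s / 2\<close>.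
\<close>

abbreviation std_normal :: "real measure" where
  "std_normal \<equiv> density lborel std_normal_density"

lemma prob_space_std_normal: "prob_space std_normal"
  by (rule prob_space_normal_density) simp

lemma finite_borel_measure_std_normal: "finite_borel_measure std_normal"
  using prob_space_std_normal
  by (intro real_distribution.finite_borel_measure_M) (simp add: real_distribution_def real_distribution_axioms_def)

lemma Phi_eq_cdf: "Phi = cdf std_normal"
  by (rule ext) (simp add: Phi_def cdf_def)

lemma Phi_nonneg: "0 \<le> Phi x"
  by (simp add: Phi_def)

lemma Phi_le_1: "Phi x \<le> 1"
  unfolding Phi_def using prob_space.prob_le_1[OF prob_space_std_normal] by simp

lemma Phi_mono: "x \<le> y \<Longrightarrow> Phi x \<le> Phi y"
  unfolding Phi_eq_cdf by (rule finite_borel_measure.cdf_nondecreasing[OF finite_borel_measure_std_normal])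

lemma borel_measurable_Phi [measurable]: "Phi \<in> borel_measurable borel"
  by (rule borel_measurable_mono) (auto simp: mono_def Phi_mono)

lemma Phi_at_bot: "(Phi \<longlongrightarrow> 0) at_bot"
  unfolding Phi_eq_cdf by (rule finite_borel_measure.cdf_lim_at_bot[OF finite_borel_measure_std_normal])

lemma emeasure_normal_atMost:
  assumes s: "0 < s"
  shows "emeasure (density lborel (normal_density m s)) {..y} = ennreal (Phi ((y - m) / s))"
proof -
  interpret N: prob_space std_normal by (rule prob_space_std_normal)
  have density_eq: "s * normal_density m s (m + s * x) = std_normal_density x" for x
    using s by (simp add: normal_density_def real_sqrt_mult power_mult_distrib field_simps)
  have indicator_eq: "indicator {..y} (m + s * x) = (indicator {..(y - m) / s} x :: ennreal)" for x
    using s by (auto simp: indicator_def pos_le_divide_eq algebra_simps)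
  have "emeasure (density lborel (normal_density m s)) {..y}
      = (\<integral>\<^sup>+x. ennreal (normal_density m s x) * indicator {..y} x \<partial>lborel)"
    by (simp add: emeasure_density)
  also have "\<dots> = ennreal s * (\<integral>\<^sup>+x. ennreal (normal_density m s (m + s * x)) * indicator {..y} (m + s * x) \<partial>lborel)"
    using s by (subst nn_integral_real_affine[where c=s and t=m]) auto
  also have "\<dots> = (\<integral>\<^sup>+x. ennreal (std_normal_density x) * indicator {..(y - m) / s} x \<partial>lborel)"
    using s by (subst nn_integral_cmult[symmetric])
      (auto intro!: nn_integral_cong simp: indicator_eq density_eq[symmetric] ennreal_mult' mult.assoc)
  also have "\<dots> = emeasure std_normal {..(y - m) / s}"
    by (simp add: emeasure_density)
  also have "\<dots> = ennreal (Phi ((y - m) / s))"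
    unfolding Phi_def by (rule N.emeasure_eq_measure)
  finally show ?thesis .
qed

lemma Phi_minus: "Phi (- x) = 1 - Phi x"
proof -
  interpret N: prob_space std_normal by (rule prob_space_std_normal)
  have "emeasure std_normal {..-x} = (\<integral>\<^sup>+t. ennreal (std_normal_density t) * indicator {..-x} t \<partial>lborel)"
    by (simp add: emeasure_density)
  also have "\<dots> = (\<integral>\<^sup>+t. ennreal (std_normal_density (0 + -1 * t)) * indicator {..-x} (0 + -1 * t) \<partial>lborel)"
    by (subst nn_integral_real_affine[where c="-1" and t=0]) auto
  also have "\<dots> = emeasure std_normal {x..}"
    by (auto intro!: nn_integral_cong simp: emeasure_density indicator_def std_normal_density_def)
  finally have "Phi (- x) = measure std_normal {x..}"
    unfolding Phi_def by (simp add: measure_def)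
  also have "\<dots> = 1 - measure std_normal (space std_normal - {x..})"
    using N.prob_compl[of "{x..}"] by simp
  also have "space std_normal - {x..} = {..<x}"
    by auto
  also have "measure std_normal {..<x} = measure std_normal {..x}"
  proof -
    have "AE y in lborel. y \<in> {x} \<longrightarrow> std_normal_density y = 0"
      by (rule eventually_mono[OF AE_lborel_singleton[of x]]) simp
    then have "{x} \<in> null_sets std_normal"
      by (subst null_sets_density_iff) auto
    moreover have "{..<x} \<union> {x} = {..x}"
      by auto
    ultimately show ?thesis
      using measure_Un_null_set[of "{..<x}" std_normal "{x}"] by simp
  qed
  finally show ?thesis by (simp add: Phi_def)
qed

lemma Phi_0: "Phi 0 = 1/2"
  using Phi_minus[of 0] by simp

lemma Phi_eq_plus_interval_integral:
  assumes "a \<le> u"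
  shows "Phi u = Phi a + (LBINT t=a..u. std_normal_density t)"
proof (cases "a = u")
  case False
  with assms have "a < u" by simp
  interpret N: prob_space std_normal by (rule prob_space_std_normal)
  have "Phi u - Phi a = measure std_normal {a<..u}"
    unfolding Phi_eq_cdf
    by (rule finite_borel_measure.cdf_diff_eq[OF finite_borel_measure_std_normal \<open>a < u\<close>])
  also have "\<dots> = integral\<^sup>L std_normal (indicator {a<..u})"
    by (simp add: N.emeasure_eq_measure)
  also have "\<dots> = (LBINT t:{a<..u}. std_normal_density t)"
    by (subst integral_density) (auto simp: set_lebesgue_integral_def mult.commute)
  also have "\<dots> = (LBINT t=a..u. std_normal_density t)"
    using assms by (simp add: interval_integral_Ioc)
  finally show ?thesis by simp
qed simp

lemma DERIV_Phi: "(Phi has_real_derivative std_normal_density x) (at x)"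
proof -
  let ?G = "\<lambda>u. Phi (x - 1) + (LBINT t=(x-1)..u. std_normal_density t)"
  have "((\<lambda>u. LBINT t=(x-1)..u. std_normal_density t) has_vector_derivative std_normal_density x)
      (at x within {x-1..x+1})"
    by (rule interval_integral_FTC2)
      (auto simp: std_normal_density_def intro!: continuous_intros)
  then have "(?G has_real_derivative std_normal_density x) (at x)"
    by (auto intro!: derivative_eq_intros
        simp: has_real_derivative_iff_has_vector_derivative at_within_Icc_at)
  then show ?thesis
  proof (rule has_field_derivative_transform_within_open[where S="{x-1<..<x+1}"])
    show "?G y = Phi y" if "y \<in> {x-1<..<x+1}" for y
      using that Phi_eq_plus_interval_integral[of "x-1" y] by simp
  qed auto
qed

lemma continuous_on_Phi: "continuous_on A Phi"
  by (intro continuous_at_imp_continuous_on ballI DERIV_isCont[OF DERIV_Phi])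

text \<open>\<open>\<kappa> = \<surd>(\<pi>/2)\<close> is the constant in \<open>C\<^sup>*\<close>: it is the scale for which \<open>\<Phi>(-\<kappa> x)\<close> and \<open>e\<^sup>-\<^sup>x / 2\<close>
  have the same value and slope at \<open>x = 0\<close>.\<close>
definition kappa :: real where "kappa = sqrt (pi / 2)"

lemma kappa_pos: "0 < kappa"
  unfolding kappa_def by simp

definition Phi_tail_gap :: "real \<Rightarrow> real" where
  "Phi_tail_gap x = exp (- x) / 2 - Phi (- kappa * x)"

lemma DERIV_Phi_tail_gap:
  "(Phi_tail_gap has_real_derivative (exp (- (pi * x\<^sup>2 / 4)) - exp (- x)) / 2) (at x)"
proof -
  have density: "std_normal_density (- kappa * x) * kappa = exp (- (pi * x\<^sup>2 / 4)) / 2"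
    unfolding kappa_def
    by (simp add: std_normal_density_def real_sqrt_divide real_sqrt_mult power_mult_distrib field_simps)
  have "((\<lambda>x. Phi (- kappa * x)) has_real_derivative std_normal_density (- kappa * x) * (- kappa)) (at x)"
    by (rule DERIV_chain2[OF DERIV_Phi]) (auto intro!: derivative_eq_intros)
  then have "(Phi_tail_gap has_real_derivative
      - exp (- x) / 2 - std_normal_density (- kappa * x) * (- kappa)) (at x)"
    unfolding Phi_tail_gap_def[abs_def] by (intro DERIV_diff) (auto intro!: derivative_eq_intros)
  moreover have "- exp (- x) / 2 - std_normal_density (- kappa * x) * (- kappa)
      = (exp (- (pi * x\<^sup>2 / 4)) - exp (- x)) / 2"
    using density by (simp add: diff_divide_distrib)
  ultimately show ?thesis
    by (metis DERIV_cong)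
qed

lemma Phi_tail_gap_deriv_nonpos:
  assumes "t \<le> 0 \<or> 4 \<le> pi * t"
  shows "\<exists>y. (Phi_tail_gap has_real_derivative y) (at t) \<and> y \<le> 0"
proof -
  have "4 * t \<le> pi * (t * t)"
  proof (cases "t \<le> 0")
    case True
    moreover have "0 \<le> pi * (t * t)"
      by simp
    ultimately show ?thesis
      by linarith
  next
    case False
    then show ?thesis
      using assms mult_right_mono[of 4 "pi * t" t] by (simp add: mult.assoc)
  qed
  then have "exp (- (pi * t\<^sup>2 / 4)) \<le> exp (- t)"
    by (simp add: power2_eq_square field_simps)
  then show ?thesis
    using DERIV_Phi_tail_gap[of t] by auto
qed

lemma Phi_tail_gap_deriv_nonneg:
  assumes "0 \<le> t" "pi * t \<le> 4"
  shows "\<exists>y. (Phi_tail_gap has_real_derivative y) (at t) \<and> 0 \<le> y"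
proof -
  have "pi * (t * t) \<le> 4 * t"
    using assms mult_right_mono[of "pi * t" 4 t] by (simp add: mult.assoc)
  then have "exp (- t) \<le> exp (- (pi * t\<^sup>2 / 4))"
    by (simp add: power2_eq_square field_simps)
  then show ?thesis
    using DERIV_Phi_tail_gap[of t] by auto
qed

lemma Phi_tail_gap_tendsto_0: "(Phi_tail_gap \<longlongrightarrow> 0) at_top"
proof -
  have "filterlim (\<lambda>y. - kappa * y) at_bot at_top"
    using filterlim_tendsto_pos_mult_at_top[OF tendsto_const kappa_pos filterlim_ident]
    by (simp add: filterlim_uminus_at_bot)
  then have "((\<lambda>y. Phi (- kappa * y)) \<longlongrightarrow> 0) at_top"
    by (rule filterlim_compose[OF Phi_at_bot])
  moreover have "((\<lambda>y::real. exp (- y) / 2) \<longlongrightarrow> 0) at_top"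
    by (auto intro!: tendsto_divide_zero filterlim_compose[OF exp_at_bot filterlim_uminus_at_bot_at_top])
  ultimately show ?thesis
    unfolding Phi_tail_gap_def[abs_def] using tendsto_diff by fastforce
qed

text \<open>\<open>Phi_tail_gap\<close> vanishes at \<open>0\<close> and at \<open>\<infinity>\<close>; it decreases on \<open>(-\<infinity>, 0]\<close>, increases on
  \<open>[0, 4/\<pi>]\<close> and decreases on \<open>[4/\<pi>, \<infinity>)\<close>.\<close>
lemma Phi_tail_gap_nonneg: "0 \<le> Phi_tail_gap x"
proof -
  have gap_0: "Phi_tail_gap 0 = 0"
    by (simp add: Phi_tail_gap_def Phi_0)
  consider "x \<le> 0" | "0 \<le> x" "pi * x \<le> 4" | "4 \<le> pi * x"
    by (cases "x \<le> 0"; cases "pi * x \<le> 4") auto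
  then show ?thesis
  proof cases
    case 1
    have "Phi_tail_gap 0 \<le> Phi_tail_gap x"
      by (rule DERIV_nonpos_imp_nonincreasing[OF 1 Phi_tail_gap_deriv_nonpos]) simp
    then show ?thesis by (simp add: gap_0)
  next
    case 2
    have "Phi_tail_gap 0 \<le> Phi_tail_gap x"
    proof (rule DERIV_nonneg_imp_nondecreasing[OF 2(1)])
      fix t assume t: "0 \<le> t" "t \<le> x"
      then have "pi * t \<le> pi * x"
        by simp
      then show "\<exists>y. (Phi_tail_gap has_real_derivative y) (at t) \<and> 0 \<le> y"
        by (rule Phi_tail_gap_deriv_nonneg[OF t(1) order_trans[OF _ 2(2)]])
    qed
    then show ?thesis by (simp add: gap_0)
  next
    case 3
    have "eventually (\<lambda>y. Phi_tail_gap y \<le> Phi_tail_gap x) at_top"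
    proof (rule eventually_at_top_linorderI[of x])
      fix y assume "x \<le> y"
      then show "Phi_tail_gap y \<le> Phi_tail_gap x"
      proof (rule DERIV_nonpos_imp_nonincreasing)
        fix t assume "x \<le> t" "t \<le> y"
        then have "pi * x \<le> pi * t"
          by simp
        then show "\<exists>y. (Phi_tail_gap has_real_derivative y) (at t) \<and> y \<le> 0"
          by (intro Phi_tail_gap_deriv_nonpos disjI2 order_trans[OF 3])
      qed
    qed
    then show ?thesis
      by (rule tendsto_upperbound[OF Phi_tail_gap_tendsto_0]) simp
  qed
qed

lemma Phi_tail_le_exp: "Phi (- kappa * x) \<le> exp (- x) / 2"
  using Phi_tail_gap_nonneg[of x] by (simp add: Phi_tail_gap_def)

lemma mult_Phi_tail_le_half:
  assumes "-1 \<le> x"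
  shows "(1 + x) * Phi (- kappa * x) \<le> 1 / 2"
proof -
  have "(1 + x) * Phi (- kappa * x) \<le> (1 + x) * (exp (- x) / 2)"
    using assms Phi_tail_le_exp[of x] by (intro mult_left_mono) auto
  also have "(1 + x) * exp (- x) \<le> exp x * exp (- x)"
    by (intro mult_right_mono) auto
  then have "(1 + x) * (exp (- x) / 2) \<le> 1 / 2"
    by (simp add: exp_minus_inverse)
  finally show ?thesis .
qed

lemma mult_Phi_minus_le:
  assumes z: "0 < z"
  shows "z * Phi (- z) \<le> pi / z"
proof -
  define w where "w = z / kappa"
  have w: "0 < w" and z_eq: "z = kappa * w"
    using z kappa_pos by (simp_all add: w_def)
  have "w\<^sup>2 / 4 \<le> exp w"
  proof -
    have "(w / 2)\<^sup>2 \<le> (exp (w / 2))\<^sup>2"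
      using w exp_ge_add_one_self[of "w/2"] by (intro power_mono) linarith+
    then show ?thesis
      by (simp add: power2_eq_square power_divide exp_add[symmetric])
  qed
  have "z * Phi (- z) \<le> z * (exp (- w) / 2)"
    using z Phi_tail_le_exp[of w] by (intro mult_left_mono) (auto simp: z_eq)
  also have "\<dots> = kappa * w / (2 * exp w)"
    by (simp add: z_eq exp_minus field_simps)
  also have "\<dots> \<le> kappa * w / (2 * (w\<^sup>2 / 4))"
    using \<open>w\<^sup>2 / 4 \<le> exp w\<close> w kappa_pos by (intro divide_left_mono mult_left_mono) auto
  also have "\<dots> = 2 * kappa * kappa / z"
    using w kappa_pos by (simp add: z_eq power2_eq_square field_simps)
  also have "2 * kappa * kappa = pi"
    unfolding kappa_def by (simp add: mult.assoc)
  finally show ?thesis .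
qed

text \<open>The tail \<open>z \<Phi>(-z) \<le> \<pi> / z\<close> confines the maximisation to a compact interval.\<close>
lemma ex_max_mult_Phi_minus: "\<exists>z\<ge>0. \<forall>w\<ge>0. w * Phi (-w) \<le> z * Phi (-z)"
proof (cases "\<forall>w\<ge>0. w * Phi (-w) \<le> 0")
  case False
  then obtain z0 where z0: "z0 \<ge> 0" "z0 * Phi (-z0) > 0"
    by (auto simp: not_le)
  define M where "M = max z0 (pi / (z0 * Phi (-z0)))"
  have "continuous_on {0..M} (\<lambda>w. w * Phi (-w))"
    by (intro continuous_intros continuous_on_compose2[OF continuous_on_Phi]) auto
  moreover have "{0..M} \<noteq> {}"
    using z0 by (simp add: M_def)
  ultimately obtain z where z: "z \<in> {0..M}" "\<forall>y\<in>{0..M}. y * Phi (-y) \<le> z * Phi (-z)"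
    using continuous_attains_sup[of "{0..M}" "\<lambda>w. w * Phi (-w)"] by auto
  have "w * Phi (-w) \<le> z * Phi (-z)" if w: "w \<ge> 0" for w
  proof (cases "w \<le> M")
    case False
    then have "w > 0" and "pi / (z0 * Phi (-z0)) < w"
      using z0 by (auto simp: M_def)
    then have "pi / w < z0 * Phi (-z0)"
      using z0 by (simp add: field_simps)
    then have "w * Phi (-w) < z0 * Phi (-z0)"
      using mult_Phi_minus_le[OF \<open>w > 0\<close>] by linarith
    also have "\<dots> \<le> z * Phi (-z)"
      using z z0 by (auto simp: M_def)
    finally show ?thesis by simp
  qed (use z w in auto)
  then show ?thesis
    using z by auto
qed auto

lemma B_const_nonneg: "0 \<le> B_const"
  and mult_Phi_minus_le_B_const: "0 \<le> w \<Longrightarrow> w * Phi (-w) \<le> B_const * Phi (- B_const)"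
  using someI_ex[OF ex_max_mult_Phi_minus] unfolding B_const_def by auto

lemma probit_regret_observed_le:
  assumes rho: "0 < rho"
  shows "a * ((if a \<ge> 0 then 1 else 0) - Phi (a / rho)) \<le> rho * B_const / 2"
proof -
  have "a * ((if a \<ge> 0 then 1 else 0) - Phi (a / rho)) = rho * (\<bar>a\<bar> / rho * Phi (- (\<bar>a\<bar> / rho)))"
    using rho by (cases "a \<ge> 0") (auto simp: Phi_minus field_simps)
  also have "\<dots> \<le> rho * (B_const * Phi (- B_const))"
    using rho mult_Phi_minus_le_B_const[of "\<bar>a\<bar> / rho"] by (intro mult_left_mono) auto
  also have "\<dots> \<le> rho * (B_const * (1/2))"
    using rho B_const_nonneg Phi_mono[of "- B_const" 0]
    by (intro mult_left_mono) (auto simp: Phi_0)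
  finally show ?thesis by simp
qed

lemma probit_regret_observed_sqrt2_le:
  assumes "0 < sd" "sd \<le> sd_max"
  shows "a * ((if a \<ge> 0 then 1 else 0) - Phi (a / (sqrt 2 * sd))) \<le> B_const * sd_max"
proof -
  have "a * ((if a \<ge> 0 then 1 else 0) - Phi (a / (sqrt 2 * sd))) \<le> sqrt 2 / 2 * (sd * B_const)"
    using probit_regret_observed_le[of "sqrt 2 * sd" a] assms by simp
  also have "\<dots> \<le> 1 * (sd_max * B_const)"
    using sqrt2_less_2 assms B_const_nonneg by (intro mult_mono) auto
  finally show ?thesis
    by (simp add: mult.commute)
qed

text \<open>Up to the sign of \<open>a\<close>, the regret is
  \<open>c (1 + x) \<Phi>(-\<kappa> x)\<close> at worst, where \<open>x = \<plusminus>b / c \<ge> -1\<close>.\<close>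
lemma probit_regret_extrapolated_le:
  assumes c: "0 < c" and ab: "\<bar>a - b\<bar> \<le> c"
  shows "a * ((if a \<ge> 0 then 1 else 0) - Phi (b / (c / kappa))) \<le> c / 2"
proof -
  define x where "x = (if a \<ge> 0 then b / c else - b / c)"
  have x: "-1 \<le> x"
    using ab c by (auto simp: x_def field_simps)
  have "b / (c / kappa) = (if a \<ge> 0 then kappa * x else - kappa * x)"
    using c kappa_pos by (auto simp: x_def field_simps)
  then have "a * ((if a \<ge> 0 then 1 else 0) - Phi (b / (c / kappa))) = \<bar>a\<bar> * Phi (- kappa * x)"
    by (auto simp: Phi_minus[of "kappa * x", symmetric])
  also have "\<dots> \<le> c * (1 + x) * Phi (- kappa * x)"
    using ab c Phi_nonneg by (intro mult_right_mono) (auto simp: x_def field_simps)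
  also have "\<dots> \<le> c * (1/2)"
    using mult_Phi_tail_le_half[OF x] c by (simp only: mult.assoc) (rule mult_left_mono, auto)
  finally show ?thesis by simp
qed

text \<open>\<open>E \<Phi>(U / \<nu>) = P(W \<le> U)\<close> for \<open>W \<sim> N(0, \<nu>\<^sup>2)\<close> independent of \<open>U \<sim> N(b, s\<^sup>2)\<close>, and
  \<open>U - W \<sim> N(b, \<nu>\<^sup>2 + s\<^sup>2)\<close>; below, the independence is a Fubini swap and the sum a convolution.\<close>
lemma nn_integral_Phi_normal:
  assumes nu: "0 < nu" and s: "0 < s"
  shows "(\<integral>\<^sup>+u. ennreal (Phi (u / nu)) \<partial>density lborel (normal_density b s))
         = ennreal (Phi (b / sqrt (nu\<^sup>2 + s\<^sup>2)))"
proof -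
  define rho where "rho = sqrt (nu\<^sup>2 + s\<^sup>2)"
  have rho: "0 < rho"
    using nu by (simp add: rho_def add_pos_nonneg)
  have centred: "normal_density b s (b + - 1 * z) = normal_density 0 s z" for z
    by (simp add: normal_density_def power2_commute)
  have Phi_shift: "ennreal (Phi ((b + -1 * z) / nu))
      = (\<integral>\<^sup>+v. ennreal (normal_density 0 nu (v - z)) * indicator {..b} v \<partial>lborel)" for z
  proof -
    have "ennreal (Phi ((b + -1 * z) / nu))
        = (\<integral>\<^sup>+w. ennreal (normal_density 0 nu w) * indicator {..b + -1 * z} w \<partial>lborel)"
      using emeasure_normal_atMost[OF nu, of 0 "b + -1 * z"] by (simp add: emeasure_density)
    also have "\<dots> = (\<integral>\<^sup>+v. ennreal (normal_density 0 nu (- z + 1 * v)) * indicator {..b + -1 * z} (- z + 1 * v) \<partial>lborel)"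
      by (subst nn_integral_real_affine[where c=1 and t="-z"]) auto
    also have "\<dots> = (\<integral>\<^sup>+v. ennreal (normal_density 0 nu (v - z)) * indicator {..b} v \<partial>lborel)"
      by (auto intro!: nn_integral_cong simp: indicator_def)
    finally show ?thesis .
  qed
  have "(\<integral>\<^sup>+u. ennreal (Phi (u / nu)) \<partial>density lborel (normal_density b s))
      = (\<integral>\<^sup>+u. ennreal (normal_density b s u) * ennreal (Phi (u / nu)) \<partial>lborel)"
    by (subst nn_integral_density) auto
  also have "\<dots> = ennreal \<bar>-1\<bar> * (\<integral>\<^sup>+z. ennreal (normal_density b s (b + -1 * z)) * ennreal (Phi ((b + -1 * z) / nu)) \<partial>lborel)"
    by (subst nn_integral_real_affine[where c="-1" and t=b]) auto
  also have "\<dots> = (\<integral>\<^sup>+z. \<integral>\<^sup>+v. ennreal (normal_density 0 nu (v - z) * normal_density 0 s z) * indicator {..b} v \<partial>lborel \<partial>lborel)"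
    unfolding centred Phi_shift
    by (subst nn_integral_cmult[symmetric]) (auto intro!: nn_integral_cong simp: ennreal_mult' mult_ac)
  also have "\<dots> = (\<integral>\<^sup>+v. \<integral>\<^sup>+z. ennreal (normal_density 0 nu (v - z) * normal_density 0 s z) * indicator {..b} v \<partial>lborel \<partial>lborel)"
    by (rule lborel_pair.Fubini') simp
  also have "\<dots> = (\<integral>\<^sup>+v. (\<integral>\<^sup>+z. ennreal (normal_density 0 nu (v - z) * normal_density 0 s z) \<partial>lborel) * indicator {..b} v \<partial>lborel)"
    by (subst nn_integral_multc) auto
  also have "\<dots> = (\<integral>\<^sup>+v. ennreal (normal_density 0 rho v) * indicator {..b} v \<partial>lborel)"
    using conv_normal_density_zero_mean[OF nu s] unfolding rho_def by (metis (no_types))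
  also have "\<dots> = emeasure (density lborel (normal_density 0 rho)) {..b}"
    by (simp add: emeasure_density)
  also have "\<dots> = ennreal (Phi (b / rho))"
    using emeasure_normal_atMost[OF rho, of 0 b] by simp
  finally show ?thesis
    unfolding rho_def .
qed

lemma integral_gauss_data_component:
  fixes f :: "real \<Rightarrow> real"
  assumes j: "j \<in> I" and sig: "\<forall>i\<in>I. 0 < sig i" and f[measurable]: "f \<in> borel_measurable borel"
  shows "integral\<^sup>L (gauss_data I mu sig) (\<lambda>u. f (u j))
       = integral\<^sup>L (density lborel (normal_density (mu j) (sig j))) f"
proof -
  let ?M = "\<lambda>i. density lborel (normal_density (mu i) (sig i))"
  have "distr (PiM I ?M) (?M j) (\<lambda>u. u j) = ?M j"
    by (rule distr_PiM_component) (use sig j in \<open>auto intro!: prob_space_normal_density\<close>)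
  moreover have "integral\<^sup>L (distr (PiM I ?M) (?M j) (\<lambda>u. u j)) f = integral\<^sup>L (PiM I ?M) (\<lambda>u. f (u j))"
    by (rule integral_distr[OF measurable_component_singleton[OF j]]) simp
  ultimately show ?thesis
    unfolding gauss_data_def by simp
qed

lemma integral_gauss_data_Phi:
  assumes j: "j \<in> I" and sig: "\<forall>i\<in>I. 0 < sig i" and nu: "0 < nu"
  shows "integral\<^sup>L (gauss_data I mu sig) (\<lambda>u. Phi (u j / nu)) = Phi (mu j / sqrt (nu\<^sup>2 + (sig j)\<^sup>2))"
proof -
  have "integral\<^sup>L (gauss_data I mu sig) (\<lambda>u. Phi (u j / nu))
      = integral\<^sup>L (density lborel (normal_density (mu j) (sig j))) (\<lambda>x. Phi (x / nu))"
    by (rule integral_gauss_data_component[OF j sig]) simp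
  also have "\<dots> = Phi (mu j / sqrt (nu\<^sup>2 + (sig j)\<^sup>2))"
    using sig j by (subst integral_eq_nn_integral) (auto simp: Phi_nonneg nn_integral_Phi_normal[OF nu])
  finally show ?thesis .
qed

lemma
  fixes X :: "nat \<Rightarrow> 'a::real_normed_vector"
  assumes "finite A" "A \<noteq> {}"
  shows nn_in: "nn X A s \<in> A"
    and nn_le: "j \<in> A \<Longrightarrow> norm (X s - X (nn X A s)) \<le> norm (X s - X j)"
proof -
  let ?D = "(\<lambda>j. norm (X s - X j)) ` A"
  have "Min ?D \<in> ?D"
    using assms by (intro Min_in) auto
  then obtain j0 where j0: "j0 \<in> A" "norm (X s - X j0) = Min ?D"
    by auto
  let ?P = "\<lambda>j. j \<in> A \<and> (\<forall>j'\<in>A. norm (X s - X j) \<le> norm (X s - X j'))"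
  have "?P (nn X A s)"
    unfolding nn_def using assms j0 by (intro LeastI[of ?P j0]) auto
  then show "nn X A s \<in> A" "j \<in> A \<Longrightarrow> norm (X s - X (nn X A s)) \<le> norm (X s - X j)"
    by auto
qed

lemma infdist_eq_norm_nn:
  fixes X :: "nat \<Rightarrow> 'a::real_normed_vector"
  assumes "finite A" "A \<noteq> {}"
  shows "infdist (X s) (X ` A) = norm (X s - X (nn X A s))"
proof (rule antisym)
  show "infdist (X s) (X ` A) \<le> norm (X s - X (nn X A s))"
    using infdist_le[of "X (nn X A s)" "X ` A" "X s"] nn_in[OF assms, where X=X and s=s] by (simp add: dist_norm)
  show "norm (X s - X (nn X A s)) \<le> infdist (X s) (X ` A)"
    unfolding infdist_def using assms nn_le[OF assms, where X=X and s=s]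
    by (auto intro!: cINF_greatest simp: dist_norm)
qed

lemma lipschitz_on_infdist: "1-lipschitz_on U (\<lambda>x. infdist x A)"
  by (rule lipschitz_onI) (auto simp: dist_real_def infdist_triangle_abs)

lemma regret_half_rule_vanishing:
  assumes T: "T \<in> half_rules Ss SP" and sig: "\<forall>i\<in>Ss. 0 < sig i"
    and vanish: "\<forall>i\<in>Ss. tau (X i) = 0" and nonneg: "\<forall>s\<in>SP. 0 \<le> tau (X s)"
  shows "regret X sig SP T Ss tau = (1 / real (card SP)) * (\<Sum>s\<in>SP. tau (X s) / 2)"
proof -
  have "gauss_data Ss (\<lambda>i. tau (X i)) sig = gauss_data Ss (\<lambda>_. 0) sig"
    unfolding gauss_data_def using vanish by (intro PiM_cong) auto
  then have "integral\<^sup>L (gauss_data Ss (\<lambda>i. tau (X i)) sig) (T s) = 1/2" if "s \<in> SP" for s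
    using T sig that unfolding half_rules_def by auto
  then show ?thesis
    unfolding regret_def using nonneg by (intro arg_cong[where f="\<lambda>x. _ * x"] sum.cong) auto
qed

lemma SUP_regret_half_rule_ge:
  fixes X :: "nat \<Rightarrow> 'a::real_normed_vector"
  assumes SP: "finite SP" and Ss: "finite Ss" "Ss \<noteq> {}" and sig: "\<forall>i\<in>Ss. 0 < sig i"
    and C: "0 < C" and T: "T \<in> half_rules Ss SP"
  shows "ereal (C / 2 * (1 / real (card SP)) * (\<Sum>s\<in>SP - Ss. norm (X s - X (nn X Ss s))))
    \<le> (SUP tau\<in>{tau. C-lipschitz_on UNIV tau}. ereal (regret X sig SP T Ss tau))"
proof -
  define tau where "tau x = C * infdist x (X ` Ss)" for x
  have "C-lipschitz_on UNIV tau"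
    using lipschitz_on_cmult_real_nonneg[OF lipschitz_on_infdist, of C] C by (simp add: tau_def)
  moreover have "regret X sig SP T Ss tau
      = C / 2 * (1 / real (card SP)) * (\<Sum>s\<in>SP - Ss. norm (X s - X (nn X Ss s)))"
  proof -
    have "regret X sig SP T Ss tau = (1 / real (card SP)) * (\<Sum>s\<in>SP. tau (X s) / 2)"
      using C by (intro regret_half_rule_vanishing[OF T sig]) (auto simp: tau_def infdist_nonneg)
    also have "(\<Sum>s\<in>SP. tau (X s) / 2) = (\<Sum>s\<in>SP - Ss. tau (X s) / 2)"
      using SP by (subst sum.Int_Diff[of _ _ Ss]) (auto simp: tau_def intro!: sum.neutral)
    also have "\<dots> = C / 2 * (\<Sum>s\<in>SP - Ss. norm (X s - X (nn X Ss s)))"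
      by (simp add: tau_def infdist_eq_norm_nn[OF Ss] sum_distrib_left)
    finally show ?thesis by simp
  qed
  ultimately show ?thesis
    by (intro SUP_upper2[of tau]) auto
qed

text \<open>The probit rule of total scale \<open>\<rho>\<close>: the nearest observed estimate is perturbed by
  independent \<open>N(0, \<rho>\<^sub>s\<^sup>2 - \<sigma>\<^sub>N\<^sub>(\<^sub>s\<^sub>)\<^sup>2)\<close> noise and thresholded at \<open>0\<close>, so that its total standard deviation
  is \<open>\<rho>\<^sub>s\<close>. Meaningful only when \<open>\<sigma>\<^sub>N\<^sub>(\<^sub>s\<^sub>) < \<rho>\<^sub>s\<close>.\<close>
definition probit_rule :: "(nat \<Rightarrow> 'a::real_normed_vector) \<Rightarrow> nat set \<Rightarrow> (nat \<Rightarrow> real)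
    \<Rightarrow> (nat \<Rightarrow> real) \<Rightarrow> nat \<Rightarrow> (nat \<Rightarrow> real) \<Rightarrow> real" where
  "probit_rule X Ss sig rho s u = Phi (u (nn X Ss s) / sqrt ((rho s)\<^sup>2 - (sig (nn X Ss s))\<^sup>2))"

lemma integral_probit_rule:
  assumes Ss: "finite Ss" "Ss \<noteq> {}" and sig: "\<forall>i\<in>Ss. 0 < sig i"
    and rho: "sig (nn X Ss s) < rho s"
  shows "integral\<^sup>L (gauss_data Ss mu sig) (probit_rule X Ss sig rho s) = Phi (mu (nn X Ss s) / rho s)"
proof -
  have "0 < sig (nn X Ss s)"
    using sig nn_in[OF Ss, where X=X and s=s] by blast
  with rho have "(sig (nn X Ss s))\<^sup>2 < (rho s)\<^sup>2" and "0 < rho s"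
    by (auto intro: power_strict_mono)
  then show ?thesis
    unfolding probit_rule_def using nn_in[OF Ss, where X=X and s=s] sig
    by (subst integral_gauss_data_Phi) auto
qed

lemma probit_rule_in_half_rules:
  assumes Ss: "finite Ss" "Ss \<noteq> {}" and sig: "\<forall>i\<in>Ss. 0 < sig i" and rho: "\<forall>s\<in>SP. sig (nn X Ss s) < rho s"
  shows "probit_rule X Ss sig rho \<in> half_rules Ss SP"
proof -
  have "(\<lambda>u. u (nn X Ss s)) \<in> borel_measurable (PiM Ss (\<lambda>_. borel))" for s
    by (rule measurable_component_singleton[OF nn_in[OF Ss]])
  then have "probit_rule X Ss sig rho s \<in> borel_measurable (PiM Ss (\<lambda>_. borel))" for s
    unfolding probit_rule_def by measurable
  then have "probit_rule X Ss sig rho \<in> treatment_rules Ss SP"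
    unfolding treatment_rules_def by (auto simp: probit_rule_def Phi_nonneg Phi_le_1)
  moreover have "integral\<^sup>L (gauss_data Ss (\<lambda>_. 0) sig') (probit_rule X Ss sig rho s) = 1/2"
    if "\<forall>i\<in>Ss. 0 < sig' i" "s \<in> SP" for sig' s
  proof -
    have "(sig (nn X Ss s))\<^sup>2 < (rho s)\<^sup>2"
      using that rho sig nn_in[OF Ss, where X=X and s=s] by (intro power_strict_mono) auto
    then show ?thesis
      unfolding probit_rule_def using that nn_in[OF Ss, where X=X and s=s]
      by (subst integral_gauss_data_Phi) (auto simp: Phi_0)
  qed
  ultimately show ?thesis
    unfolding half_rules_def by auto
qed

lemma regret_probit_rule:
  assumes Ss: "finite Ss" "Ss \<noteq> {}" and sig: "\<forall>i\<in>Ss. 0 < sig i"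
    and rho: "\<forall>s\<in>SP. sig (nn X Ss s) < rho s"
  shows "regret X sig SP (probit_rule X Ss sig rho) Ss tau = (1 / real (card SP)) *
    (\<Sum>s\<in>SP. tau (X s) * ((if tau (X s) \<ge> 0 then 1 else 0) - Phi (tau (X (nn X Ss s)) / rho s)))"
  unfolding regret_def using rho
  by (intro arg_cong[where f="\<lambda>x. _ * x"] sum.cong) (auto simp: integral_probit_rule[OF Ss sig])

text \<open>At unobserved sites the scale \<open>C d\<^sub>s / \<kappa>\<close> exceeds \<open>\<sigma>\<^sub>N\<^sub>(\<^sub>s\<^sub>)\<close> exactly when \<open>C\<close> beats the ratio
  defining \<open>C\<^sup>*\<close>; at observed sites \<open>\<surd>2 \<sigma>\<close> keeps the regret below \<open>B \<sigma>\<close>.\<close>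
definition probit_scale :: "(nat \<Rightarrow> 'a::real_normed_vector) \<Rightarrow> nat set \<Rightarrow> (nat \<Rightarrow> real)
    \<Rightarrow> real \<Rightarrow> nat \<Rightarrow> real" where
  "probit_scale X Ss sig C s =
    (if s \<in> Ss then sqrt 2 * sig (nn X Ss s) else C * norm (X s - X (nn X Ss s)) / kappa)"

lemma sig_nn_less_probit_scale:
  assumes Ss: "finite Ss" "Ss \<noteq> {}" and sig: "\<forall>i\<in>Ss. 0 < sig i"
    and sep: "\<forall>s\<in>SP - Ss. kappa * sig (nn X Ss s) < C * norm (X s - X (nn X Ss s))"
  shows "\<forall>s\<in>SP. sig (nn X Ss s) < probit_scale X Ss sig C s"
proof
  fix s assume "s \<in> SP"
  have "0 < sig (nn X Ss s)"
    using sig nn_in[OF Ss, where X=X and s=s] by blast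
  then show "sig (nn X Ss s) < probit_scale X Ss sig C s"
    using sep \<open>s \<in> SP\<close> kappa_pos by (auto simp: probit_scale_def pos_less_divide_eq mult.commute)
qed

lemma probit_scale_site_regret_le:
  fixes X :: "nat \<Rightarrow> 'a::real_normed_vector"
  assumes Ss: "finite Ss" "Ss \<noteq> {}"
    and sig: "\<forall>i\<in>Ss. 0 < sig i" and sig_le: "\<forall>i\<in>Ss. sig i \<le> sd_max"
    and sep: "\<forall>s\<in>SP - Ss. kappa * sig (nn X Ss s) < C * norm (X s - X (nn X Ss s))"
    and L: "C-lipschitz_on UNIV tau" and s: "s \<in> SP"
  shows "tau (X s) * ((if tau (X s) \<ge> 0 then 1 else 0)
      - Phi (tau (X (nn X Ss s)) / probit_scale X Ss sig C s))
    \<le> (if s \<in> Ss then B_const * sd_max else C * norm (X s - X (nn X Ss s)) / 2)"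
proof -
  have sig_nn: "0 < sig (nn X Ss s)" "sig (nn X Ss s) \<le> sd_max"
    using sig sig_le nn_in[OF Ss, where X=X and s=s] by auto
  show ?thesis
  proof (cases "s \<in> Ss")
    case True
    \<comment> \<open>the nearest neighbour of an observed site shares its covariate\<close>
    then have "norm (X s - X (nn X Ss s)) \<le> 0"
      using nn_le[OF Ss, of s X s] by simp
    then show ?thesis
      using True probit_regret_observed_sqrt2_le[OF sig_nn, of "tau (X s)"]
      by (simp add: probit_scale_def)
  next
    case False
    then have "kappa * sig (nn X Ss s) < C * norm (X s - X (nn X Ss s))"
      using sep s by simp
    then have "0 < C * norm (X s - X (nn X Ss s))"
      using mult_pos_pos[OF kappa_pos sig_nn(1)] by linarith
    moreover have "\<bar>tau (X s) - tau (X (nn X Ss s))\<bar> \<le> C * norm (X s - X (nn X Ss s))"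
      using lipschitz_onD[OF L] by (simp add: dist_real_def dist_norm)
    ultimately show ?thesis
      using False probit_regret_extrapolated_le by (simp add: probit_scale_def)
  qed
qed

lemma regret_probit_scale_le:
  fixes X :: "nat \<Rightarrow> 'a::real_normed_vector"
  assumes SP: "finite SP" "SP \<noteq> {}" and Ss: "finite Ss" "Ss \<noteq> {}"
    and sig: "\<forall>i\<in>Ss. 0 < sig i" and sig_le: "\<forall>i\<in>Ss. sig i \<le> sd_max"
    and n: "card (SP \<inter> Ss) \<le> n"
    and sep: "\<forall>s\<in>SP - Ss. kappa * sig (nn X Ss s) < C * norm (X s - X (nn X Ss s))"
    and L: "C-lipschitz_on UNIV tau"
  shows "regret X sig SP (probit_rule X Ss sig (probit_scale X Ss sig C)) Ss tau
    \<le> C / 2 * (1 / real (card SP)) * (\<Sum>s\<in>SP - Ss. norm (X s - X (nn X Ss s)))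
      + B_const * sd_max * real n / real (card SP)"
proof -
  define d where "d s = norm (X s - X (nn X Ss s))" for s
  define r where "r s = tau (X s) * ((if tau (X s) \<ge> 0 then 1 else 0)
    - Phi (tau (X (nn X Ss s)) / probit_scale X Ss sig C s))" for s
  have r_le: "r s \<le> (if s \<in> Ss then B_const * sd_max else C * d s / 2)" if "s \<in> SP" for s
    unfolding r_def d_def by (rule probit_scale_site_regret_le[OF Ss sig sig_le sep L that])
  have observed: "r s \<le> B_const * sd_max" if "s \<in> SP \<inter> Ss" for s
    using r_le[of s] that by simp
  have unobserved: "r s \<le> C * d s / 2" if "s \<in> SP - Ss" for s
    using r_le[of s] that by simp
  have "0 \<le> B_const * sd_max"
    using sig sig_le Ss(2) B_const_nonneg by (meson all_not_in_conv less_le_trans less_imp_le mult_nonneg_nonneg)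
  have "(\<Sum>s\<in>SP. r s) = (\<Sum>s\<in>SP \<inter> Ss. r s) + (\<Sum>s\<in>SP - Ss. r s)"
    using SP by (intro sum.Int_Diff)
  also have "\<dots> \<le> real (card (SP \<inter> Ss)) * (B_const * sd_max) + (\<Sum>s\<in>SP - Ss. C * d s / 2)"
    using observed unobserved by (intro add_mono sum_bounded_above sum_mono) auto
  also have "\<dots> \<le> real n * (B_const * sd_max) + (\<Sum>s\<in>SP - Ss. C * d s / 2)"
    using n \<open>0 \<le> B_const * sd_max\<close> by (intro add_right_mono mult_right_mono) simp_all
  also have "(\<Sum>s\<in>SP - Ss. C * d s / 2) = C / 2 * (\<Sum>s\<in>SP - Ss. d s)"
    by (simp add: sum_distrib_left)
  finally have "(1 / real (card SP)) * (\<Sum>s\<in>SP. r s)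
      \<le> (1 / real (card SP)) * (real n * (B_const * sd_max) + C / 2 * (\<Sum>s\<in>SP - Ss. d s))"
    by (intro mult_left_mono) auto
  also have "\<dots> = C / 2 * (1 / real (card SP)) * (\<Sum>s\<in>SP - Ss. norm (X s - X (nn X Ss s)))
      + B_const * sd_max * real n / real (card SP)"
    using SP by (simp add: d_def field_simps)
  finally show ?thesis
    unfolding regret_probit_rule[OF Ss sig sig_nn_less_probit_scale[OF Ss sig sep]] r_def[symmetric] .
qed

lemma nn_separated_if_Cstar_less:
  fixes X :: "nat \<Rightarrow> 'a::real_normed_vector"
  assumes SE: "finite SE" and SP: "finite SP" and inj: "inj_on X (SE \<union> SP)"
    and Ss: "Ss \<in> A_k SE k" "Ss \<noteq> {}" and C: "Cstar X sig SE SP k < C"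
  shows "\<forall>s\<in>SP - Ss. kappa * sig (nn X Ss s) < C * norm (X s - X (nn X Ss s))"
proof
  fix s assume s: "s \<in> SP - Ss"
  have "Ss \<subseteq> SE"
    using Ss by (simp add: A_k_def)
  then have "nn X Ss s \<in> SE - {s}"
    using nn_in[of Ss X s] finite_subset[OF _ SE] Ss s by auto
  then have d_pos: "0 < norm (X s - X (nn X Ss s))"
    using inj s by (auto dest: inj_onD)
  have "finite {sqrt (pi/2) * sig (nn X A t) / norm (X t - X (nn X A t)) | A t.
      A \<in> A_k SE k \<and> A \<noteq> {} \<and> t \<in> SP - A}"
    by (rule finite_subset[where B="(\<lambda>(A, t). sqrt (pi/2) * sig (nn X A t) / norm (X t - X (nn X A t)))
        ` (Pow SE \<times> SP)"]) (auto simp: A_k_def SE SP)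
  then have "kappa * sig (nn X Ss s) / norm (X s - X (nn X Ss s)) \<le> Cstar X sig SE SP k"
    unfolding Cstar_def kappa_def using Ss s by (intro Max_ge) blast+
  then have "kappa * sig (nn X Ss s) / norm (X s - X (nn X Ss s)) < C"
    using C by linarith
  then show "kappa * sig (nn X Ss s) < C * norm (X s - X (nn X Ss s))"
    using d_pos by (simp add: pos_divide_less_eq mult.commute)
qed

lemma ereal_abs_diff_le_if_between:
  assumes "ereal v \<le> x" "x \<le> ereal (v + r)"
  shows "\<bar>x - ereal v\<bar> \<le> ereal r"
  using assms by (cases x) auto

theorem theorem1:
  fixes Snum :: nat and SE SP :: "nat set" and X :: "nat \<Rightarrow> 'a::euclidean_space"
    and sig :: "nat \<Rightarrow> real" and C :: real and k :: nat and tau0 :: "'a \<Rightarrow> real"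
    and Ss :: "nat set"
  assumes SE_sub: "SE \<subseteq> {1..Snum}" and SE_card: "card SE \<ge> 2"
    and SP_sub: "SP \<subseteq> {1..Snum}" and SP_ne: "SP \<noteq> {}"
    and sig_pos: "\<forall>s\<in>{1..Snum}. 0 < sig s"
    and C_pos: "C > 0"
    and A1: "C-lipschitz_on UNIV tau0"
    and A2: "inj_on X {1..Snum}"
    and k: "1 \<le> k" "k < card SE"
    and C_gt: "C > Cstar X sig SE SP k"
    and Ss: "Ss \<in> A_k SE k" "Ss \<noteq> {}"
  shows "\<bar>(INF T\<in>half_rules Ss SP. SUP tau\<in>{tau. C-lipschitz_on UNIV tau}.
             ereal (regret X sig SP T Ss tau))
          - ereal (C / 2 * (1 / real (card SP)) *
                   (\<Sum>s\<in>SP - Ss. norm (X s - X (nn X Ss s))))\<bar>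
         \<le> ereal (B_const * Max (sig ` SE) * real (min (card (SE \<inter> SP)) k) / real (card SP))"
proof -
  have SE: "finite SE" and SP: "finite SP"
    using SE_sub SP_sub finite_subset by auto
  have Ss_sub: "Ss \<subseteq> SE" "card Ss \<le> k" and Ss_fin: "finite Ss"
    using Ss(1) SE by (auto simp: A_k_def intro: finite_subset)
  have sig_Ss: "\<forall>i\<in>Ss. 0 < sig i" "\<forall>i\<in>Ss. sig i \<le> Max (sig ` SE)"
    using sig_pos Ss_sub SE_sub SE by auto
  have card_le: "card (SP \<inter> Ss) \<le> min (card (SE \<inter> SP)) k"
    using Ss_sub SE card_mono[OF Ss_fin, of "SP \<inter> Ss"] by (auto intro: card_mono)
  have sep: "\<forall>s\<in>SP - Ss. kappa * sig (nn X Ss s) < C * norm (X s - X (nn X Ss s))"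
    using inj_on_subset[OF A2] SE_sub SP_sub by (intro nn_separated_if_Cstar_less[OF SE SP _ Ss C_gt]) simp
  define T where "T = probit_rule X Ss sig (probit_scale X Ss sig C)"
  have "T \<in> half_rules Ss SP"
    unfolding T_def using sep
    by (intro probit_rule_in_half_rules sig_nn_less_probit_scale Ss_fin Ss(2) sig_Ss(1))
  define V where "V = C / 2 * (1 / real (card SP)) * (\<Sum>s\<in>SP - Ss. norm (X s - X (nn X Ss s)))"
  let ?I = "INF T\<in>half_rules Ss SP. SUP tau\<in>{tau. C-lipschitz_on UNIV tau}. ereal (regret X sig SP T Ss tau)"
  have "ereal V \<le> ?I"
    unfolding V_def by (rule INF_greatest, rule SUP_regret_half_rule_ge[OF SP Ss_fin Ss(2) sig_Ss(1) C_pos])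
  moreover have "?I \<le> ereal (V + B_const * Max (sig ` SE) * real (min (card (SE \<inter> SP)) k) / real (card SP))"
    using regret_probit_scale_le[OF SP SP_ne Ss_fin Ss(2) sig_Ss card_le sep]
    by (intro INF_lower2[OF \<open>T \<in> half_rules Ss SP\<close>] SUP_least) (simp add: T_def V_def)
  ultimately show ?thesis
    unfolding V_def by (rule ereal_abs_diff_le_if_between)
qed

end
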